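(* Let $G$ be an antipodal partial cube of rank $3$ and let $E_e$ be a $\Theta$-class of $G$. Then there is a vertex of degree $3$ incident to an edge of $E_e$.
   Context: Hypercube $Q_n$: vertex set $\{+,-\}^n$, adjacency = differing in one coordinate. A partial cube is an isometric subgraph $G$ of $Q_n$ with $n$ minimal; its edges split into $\Theta$-classes $E_f$ (edges whose endpoints differ in coordinate $f$). $G$ is antipodal if for each vertex $v$ of $G$ the vertex with all coordinates of $v$ flipped is also in $G$. The contraction $\pi_f(G)$ contracts all edges of $E_f$; the rank of $G$ is the largest $r$ such that $Q_r$ can be obtained from $G$ by a sequence of contractions. *)

theory Defs
  imports Main
begin

text \<open>Vertices of the hypercube Q_n are encoded as subsets of {0..<n}
 (the set of coordinates carrying sign +). A subgraph of a hypercube is given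
 by its vertex set V; edges are the hypercube edges between vertices of V
 (isometric subgraphs are induced).\<close>

definition hdist :: "nat set \<Rightarrow> nat set \<Rightarrow> nat" where
  "hdist u v = card ((u - v) \<union> (v - u))"

definition hadj :: "nat set \<Rightarrow> nat set \<Rightarrow> bool" where
  "hadj u v \<longleftrightarrow> hdist u v = 1"

definition flip :: "nat \<Rightarrow> nat set \<Rightarrow> nat set" where
  "flip f v = (if f \<in> v then v - {f} else insert f v)"

definition walk :: "nat set set \<Rightarrow> nat set list \<Rightarrow> bool" where
  "walk V xs \<longleftrightarrow> xs \<noteq> [] \<and> set xs \<subseteq> V \<and>
     (\<forall>i. Suc i < length xs \<longrightarrow> hadj (xs ! i) (xs ! Suc i))"

definition reachable :: "nat set set \<Rightarrow> nat set \<Rightarrow> nat set \<Rightarrow> bool" where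
  "reachable V u v \<longleftrightarrow> (\<exists>xs. walk V xs \<and> hd xs = u \<and> last xs = v)"

definition gdist :: "nat set set \<Rightarrow> nat set \<Rightarrow> nat set \<Rightarrow> nat" where
  "gdist V u v = (LEAST k. \<exists>xs. walk V xs \<and> hd xs = u \<and> last xs = v \<and> length xs = Suc k)"

definition isometric_sub :: "nat \<Rightarrow> nat set set \<Rightarrow> bool" where
  "isometric_sub n V \<longleftrightarrow> V \<noteq> {} \<and> V \<subseteq> Pow {0..<n} \<and>
     (\<forall>u\<in>V. \<forall>v\<in>V. reachable V u v \<and> gdist V u v = hdist u v)"

text \<open>Partial cube: isometric in Q_n with n minimal, i.e. every coordinate
 is non-constant on V (equivalently every Theta-class E_f, f < n, is non-empty).\<close>
definition partial_cube :: "nat \<Rightarrow> nat set set \<Rightarrow> bool" where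
  "partial_cube n V \<longleftrightarrow> isometric_sub n V \<and>
     (\<forall>f<n. \<exists>u\<in>V. \<exists>v\<in>V. f \<in> u \<and> f \<notin> v)"

definition antipodal :: "nat \<Rightarrow> nat set set \<Rightarrow> bool" where
  "antipodal n V \<longleftrightarrow> (\<forall>v\<in>V. {0..<n} - v \<in> V)"

text \<open>Contraction of the Theta-class E_f: identifies the endpoints of every
 edge of E_f, i.e. forgets coordinate f.\<close>
definition contract :: "nat \<Rightarrow> nat set set \<Rightarrow> nat set set" where
  "contract f V = (\<lambda>v. v - {f}) ` V"

definition graph_iso :: "nat set set \<Rightarrow> nat set set \<Rightarrow> bool" where
  "graph_iso V W \<longleftrightarrow> (\<exists>\<phi>. bij_betw \<phi> V W \<and>
     (\<forall>u\<in>V. \<forall>v\<in>V. hadj u v \<longleftrightarrow> hadj (\<phi> u) (\<phi> v)))"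

definition cube :: "nat \<Rightarrow> nat set set" where
  "cube r = Pow {0..<r}"

definition pc_rank :: "nat set set \<Rightarrow> nat" where
  "pc_rank V = (GREATEST r. \<exists>fs. graph_iso (fold contract fs V) (cube r))"

definition degree :: "nat set set \<Rightarrow> nat set \<Rightarrow> nat" where
  "degree V v = card {u\<in>V. hadj u v}"

end

theory Submission
  imports Defs
begin

lemma mem_flip_iff: "i \<in> flip f v \<longleftrightarrow> (if i = f then i \<notin> v else i \<in> v)"
  by (auto simp: flip_def)

lemma flip_flip [simp]: "flip f (flip f v) = v"
  by (auto simp: flip_def)

lemma flip_neq: "flip f v \<noteq> v"
  by (auto simp: flip_def)

lemma flip_eq_flip_iff [simp]: "flip s v = flip t v \<longleftrightarrow> s = t"
  by (metis mem_flip_iff)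

lemma hdist_commute: "hdist u v = hdist v u"
  by (simp add: hdist_def Un_commute)

lemma hdist_self [simp]: "hdist u u = 0"
  by (simp add: hdist_def)

lemma hdist_triangle:
  assumes "finite a" "finite b" "finite c"
  shows "hdist a c \<le> hdist a b + hdist b c"
proof -
  have "(a - c) \<union> (c - a) \<subseteq> ((a - b) \<union> (b - a)) \<union> ((b - c) \<union> (c - b))" by auto
  then have "hdist a c \<le> card (((a - b) \<union> (b - a)) \<union> ((b - c) \<union> (c - b)))"
    unfolding hdist_def by (intro card_mono) (use assms in auto)
  also have "\<dots> \<le> hdist a b + hdist b c" unfolding hdist_def by (rule card_Un_le)
  finally show ?thesis .
qed

lemma hdist_detour:
  assumes "finite a" "finite b" "finite c"
    and "x \<in> a \<longleftrightarrow> x \<in> c" "x \<in> b \<longleftrightarrow> x \<notin> a"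
  shows "hdist a c + 2 \<le> hdist a b + hdist b c"
proof -
  let ?A = "(a - b) \<union> (b - a)" and ?B = "(b - c) \<union> (c - b)" and ?C = "(a - c) \<union> (c - a)"
  have fin: "finite ?A" "finite ?B" "finite ?C" using assms by auto
  have sub: "insert x ?C \<subseteq> ?A \<union> ?B" and x: "x \<notin> ?C" using assms by auto
  have "card ?C + 1 = card (insert x ?C)" using fin x by simp
  also have "\<dots> \<le> card (?A \<union> ?B)" using fin sub by (intro card_mono) auto
  finally have "card ?C + 1 \<le> card (?A \<union> ?B)" .
  moreover have "x \<in> ?A \<inter> ?B" using assms by auto
  then have "1 \<le> card (?A \<inter> ?B)"
    using fin by (metis One_nat_def Suc_leI card_gt_0_iff emptyE finite_Int)
  moreover have "card (?A \<union> ?B) + card (?A \<inter> ?B) = card ?A + card ?B"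
    using fin card_Un_Int by metis
  ultimately show ?thesis unfolding hdist_def by linarith
qed

lemma hadj_imp_flip:
  assumes "hadj u w"
  obtains t where "w = flip t u"
proof -
  have "card ((u - w) \<union> (w - u)) = 1" using assms by (simp add: hadj_def hdist_def)
  then obtain t where t: "(u - w) \<union> (w - u) = {t}" by (meson card_1_singletonE)
  have "(i \<in> u \<longleftrightarrow> i \<notin> w) \<longleftrightarrow> i = t" for i
  proof -
    have "i \<in> (u - w) \<union> (w - u) \<longleftrightarrow> i \<in> {t}" using t by simp
    then show ?thesis by auto
  qed
  then have "w = flip t u" by (intro set_eqI) (metis mem_flip_iff)
  then show thesis by (rule that)
qed

lemma hadj_flip: "hadj u (flip t u)"
proof -
  have "(u - flip t u) \<union> (flip t u - u) = {t}" by (auto simp: flip_def)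
  then show ?thesis by (simp add: hadj_def hdist_def)
qed

lemma hadj_commute: "hadj u v \<longleftrightarrow> hadj v u"
  by (simp add: hadj_def hdist_commute)

lemma four_cycle_opposite_flip:
  assumes "hadj a b" "hadj a c" "hadj b d" "hadj c d" "b \<noteq> c" "a \<noteq> d"
    and "c = flip t a"
  shows "d = flip t b"
proof -
  obtain s where s: "b = flip s a" using assms(1) by (rule hadj_imp_flip)
  obtain u where u: "d = flip u b" using assms(3) by (rule hadj_imp_flip)
  obtain u' where u': "d = flip u' c" using assms(4) by (rule hadj_imp_flip)
  have "s \<noteq> t" "u' \<noteq> t" using s u' assms(5-7) by auto
  moreover have "t \<in> flip u (flip s a) \<longleftrightarrow> t \<in> flip u' (flip t a)" using s u u' assms(7) by simp
  ultimately have "u = t" by (simp add: mem_flip_iff split: if_splits)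
  then show ?thesis using u by simp
qed

definition shatters :: "nat set set \<Rightarrow> nat set \<Rightarrow> bool" where
  "shatters V S \<longleftrightarrow> (\<forall>s. \<exists>v\<in>V. \<forall>i\<in>S. (i \<in> v) = s i)"

lemma shatters_contract:
  assumes "shatters ((\<lambda>v. v - F) ` V) S"
  shows "shatters V S"
proof -
  obtain v0 where "v0 \<in> V" "S \<subseteq> v0 - F"
    using assms[unfolded shatters_def, rule_format, of "\<lambda>_. True"] by auto
  then have disj: "S \<inter> F = {}" by blast
  show ?thesis unfolding shatters_def
  proof
    fix s
    obtain v where "v \<in> V" "\<forall>i\<in>S. (i \<in> v - F) = s i"
      using assms unfolding shatters_def by blast
    then show "\<exists>v\<in>V. \<forall>i\<in>S. (i \<in> v) = s i" using disj by blast
  qed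
qed

lemma fold_contract: "fold contract fs V = (\<lambda>v. v - set fs) ` V"
proof (induction fs arbitrary: V)
  case Nil
  then show ?case by simp
next
  case (Cons x fs)
  have "fold contract (x # fs) V = fold contract fs (contract x V)" by simp
  also have "\<dots> = (\<lambda>v. v - set fs) ` ((\<lambda>v. v - {x}) ` V)" using Cons unfolding contract_def by simp
  also have "\<dots> = (\<lambda>v. v - set (x # fs)) ` V" by (auto simp: image_image Diff_insert2[symmetric])
  finally show ?case .
qed

definition cube_minor :: "nat set set \<Rightarrow> nat \<Rightarrow> bool" where
  "cube_minor V r \<longleftrightarrow> (\<exists>fs. graph_iso (fold contract fs V) (cube r))"

lemma pc_rank_eq_Greatest: "pc_rank V = Greatest (cube_minor V)"
  unfolding pc_rank_def cube_minor_def ..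

lemma cube_minor_le_card:
  assumes "finite V" "cube_minor V r"
  shows "r \<le> card V"
proof -
  obtain fs \<phi> where "bij_betw \<phi> (fold contract fs V) (cube r)"
    using assms(2) unfolding cube_minor_def graph_iso_def by blast
  then have "2 ^ r = card (fold contract fs V)" by (simp add: bij_betw_same_card cube_def card_Pow)
  also have "\<dots> \<le> card V" unfolding fold_contract using assms(1) by (rule card_image_le)
  finally show ?thesis using less_exp[of r] by linarith
qed

lemma cube_minor_pc_rank:
  assumes "finite V" "V \<noteq> {}" "V \<subseteq> Pow {0..<n}"
  shows "cube_minor V (pc_rank V)"
proof -
  have "fold contract [0..<n] V = {{}}" "cube 0 = {{}}"
    using assms(2,3) by (auto simp: fold_contract cube_def)
  moreover have "graph_iso {{}} {{}}" unfolding graph_iso_def by (intro exI[of _ id]) simp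
  ultimately have base: "cube_minor V 0" unfolding cube_minor_def by (intro exI[of _ "[0..<n]"]) simp
  show ?thesis unfolding pc_rank_eq_Greatest
    by (rule GreatestI_nat[of "cube_minor V" 0 "card V", OF base cube_minor_le_card[OF assms(1)]])
qed

lemma cube_minor_le_pc_rank:
  assumes "finite V" "cube_minor V r"
  shows "r \<le> pc_rank V"
  unfolding pc_rank_eq_Greatest
  by (rule Greatest_le_nat[of "cube_minor V" r "card V", OF assms(2) cube_minor_le_card[OF assms(1)]])

lemma hdist_image:
  assumes "inj_on g S" "u \<subseteq> S" "v \<subseteq> S"
  shows "hdist (g ` u) (g ` v) = hdist u v"
proof -
  have "g ` u - g ` v = g ` (u - v)" "g ` v - g ` u = g ` (v - u)"
    using assms by (metis Diff_subset inj_on_image_set_diff order_trans)+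
  then have "(g ` u - g ` v) \<union> (g ` v - g ` u) = g ` ((u - v) \<union> (v - u))" by auto
  moreover have "inj_on g ((u - v) \<union> (v - u))" using assms by (auto intro: inj_on_subset)
  ultimately show ?thesis unfolding hdist_def by (simp add: card_image)
qed

lemma shatters_imp_cube_minor:
  assumes "V \<subseteq> Pow {0..<n}" "shatters V S"
  shows "cube_minor V (card S)"
proof -
  obtain v0 where "v0 \<in> V" "S \<subseteq> v0"
    using assms(2)[unfolded shatters_def, rule_format, of "\<lambda>_. True"] by auto
  then have Sn: "S \<subseteq> {0..<n}" using assms(1) by auto
  define fs where "fs = sorted_list_of_set ({0..<n} - S)"
  have set_fs: "set fs = {0..<n} - S" unfolding fs_def by simp
  have fold: "fold contract fs V = Pow S"
  proof
    show "fold contract fs V \<subseteq> Pow S"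
      using assms(1) unfolding fold_contract set_fs by blast
    show "Pow S \<subseteq> fold contract fs V"
    proof
      fix T assume T: "T \<in> Pow S"
      obtain v where v: "v \<in> V" "\<forall>i\<in>S. (i \<in> v) = (i \<in> T)"
        using assms(2)[unfolded shatters_def, rule_format, of "\<lambda>i. i \<in> T"] by blast
      have "v \<subseteq> {0..<n}" using v(1) assms(1) by blast
      then have "v - set fs = T" using v(2) T Sn unfolding set_fs by blast
      then show "T \<in> fold contract fs V" using v(1) unfolding fold_contract by blast
    qed
  qed
  obtain g where g: "bij_betw g S {0..<card S}"
    using Sn by (metis ex_bij_betw_finite_nat finite_atLeastLessThan finite_subset)
  have iso: "graph_iso (Pow S) (cube (card S))"
    unfolding graph_iso_def cube_def
  proof (intro exI[of _ "image g"] conjI ballI)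
    show "bij_betw (image g) (Pow S) (Pow {0..<card S})" using g by (rule bij_betw_Pow)
    fix A B assume "A \<in> Pow S" "B \<in> Pow S"
    then show "hadj A B \<longleftrightarrow> hadj (g ` A) (g ` B)"
      using hdist_image[OF bij_betw_imp_inj_on[OF g]] by (simp add: hadj_def)
  qed
  show ?thesis unfolding cube_minor_def using fold iso by (intro exI[of _ fs]) simp
qed

lemma cube3_embedding_shatters:
  assumes inj: "inj_on \<psi> (Pow {0..<3::nat})"
    and adj: "\<And>A B. A \<subseteq> {0..<3} \<Longrightarrow> B \<subseteq> {0..<3} \<Longrightarrow> hadj A B \<Longrightarrow> hadj (\<psi> A) (\<psi> B)"
  obtains s0 s1 s2 where "distinct [s0, s1, s2]" "shatters (\<psi> ` Pow {0..<3}) {s0, s1, s2}"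
proof -
  have h: "hadj {} {0::nat}" "hadj {} {1::nat}" "hadj {} {2::nat}"
    "hadj {0} {0,1::nat}" "hadj {1} {0,1::nat}" "hadj {0} {0,2::nat}" "hadj {2} {0,2::nat}"
    "hadj {1} {1,2::nat}" "hadj {2} {1,2::nat}" "hadj {0,1} {0,1,2::nat}" "hadj {0,2} {0,1,2::nat}"
    by (simp_all add: hadj_def hdist_def insert_Diff_if)
  then have e: "hadj (\<psi> {}) (\<psi> {0})" "hadj (\<psi> {}) (\<psi> {1})" "hadj (\<psi> {}) (\<psi> {2})"
    "hadj (\<psi> {0}) (\<psi> {0,1})" "hadj (\<psi> {1}) (\<psi> {0,1})" "hadj (\<psi> {0}) (\<psi> {0,2})"
    "hadj (\<psi> {2}) (\<psi> {0,2})" "hadj (\<psi> {1}) (\<psi> {1,2})" "hadj (\<psi> {2}) (\<psi> {1,2})"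
    "hadj (\<psi> {0,1}) (\<psi> {0,1,2})" "hadj (\<psi> {0,2}) (\<psi> {0,1,2})"
    by (auto intro!: adj)
  have ne: "\<psi> A \<noteq> \<psi> B" if "A \<subseteq> {0..<3}" "B \<subseteq> {0..<3}" "A \<noteq> B" for A B
    using inj that by (auto dest: inj_onD)
  define x where "x = \<psi> {}"
  obtain s0 where s0: "\<psi> {0} = flip s0 x" using e(1) unfolding x_def by (rule hadj_imp_flip)
  obtain s1 where s1: "\<psi> {1} = flip s1 x" using e(2) unfolding x_def by (rule hadj_imp_flip)
  obtain s2 where s2: "\<psi> {2} = flip s2 x" using e(3) unfolding x_def by (rule hadj_imp_flip)
  have y01: "\<psi> {0,1} = flip s1 (\<psi> {0})"
    by (rule four_cycle_opposite_flip[OF e(1,2,4,5)]) (use ne[of "{0}" "{1}"] ne[of "{}" "{0,1}"] s1 x_def in auto)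
  have y02: "\<psi> {0,2} = flip s2 (\<psi> {0})"
    by (rule four_cycle_opposite_flip[OF e(1,3,6,7)]) (use ne[of "{0}" "{2}"] ne[of "{}" "{0,2}"] s2 x_def in auto)
  have y12: "\<psi> {1,2} = flip s2 (\<psi> {1})"
    by (rule four_cycle_opposite_flip[OF e(2,3,8,9)]) (use ne[of "{1}" "{2}"] ne[of "{}" "{1,2}"] s2 x_def in auto)
  have "(1::nat) \<notin> {0,2}" "(1::nat) \<notin> {0}" by simp_all
  then have "{0,1::nat} \<noteq> {0,2}" "{0::nat} \<noteq> {0,1,2}" by blast+
  then have z: "\<psi> {0,1,2} = flip s2 (\<psi> {0,1})"
    by (intro four_cycle_opposite_flip[OF e(4,6,10,11)] ne y02) auto
  have "distinct [s0, s1, s2]"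
    using ne[of "{0}" "{1}"] ne[of "{0}" "{2}"] ne[of "{1}" "{2}"] s0 s1 s2 by auto
  moreover have "shatters (\<psi> ` Pow {0..<3}) {s0, s1, s2}"
    unfolding shatters_def
  proof
    fix s :: "nat \<Rightarrow> bool"
    let ?C = "{x, flip s0 x, flip s1 x, flip s2 x, flip s1 (flip s0 x), flip s2 (flip s0 x),
      flip s2 (flip s1 x), flip s2 (flip s1 (flip s0 x))}"
    have "\<exists>v\<in>?C. \<forall>i\<in>{s0, s1, s2}. (i \<in> v) = s i"
      using \<open>distinct [s0, s1, s2]\<close> by (simp add: mem_flip_iff) metis
    then obtain v where v: "v \<in> ?C" "\<forall>i\<in>{s0, s1, s2}. (i \<in> v) = s i" by (rule bexE)
    have C: "?C = \<psi> ` {{}, {0}, {1}, {2}, {0,1}, {0,2}, {1,2}, {0,1,2}}"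
      by (simp only: image_insert image_empty s0 s1 s2 y01 y02 y12 z x_def)
    have "{{}, {0}, {1}, {2}, {0,1}, {0,2}, {1,2}, {0,1,2}} \<subseteq> Pow {0..<3::nat}"
      by (simp add: insert_subset)
    then have "?C \<subseteq> \<psi> ` Pow {0..<3}" unfolding C by (rule image_mono)
    with v show "\<exists>v\<in>\<psi> ` Pow {0..<3}. \<forall>i\<in>{s0, s1, s2}. (i \<in> v) = s i"
      by (intro bexI[of _ v]) (auto dest: subsetD)
  qed
  ultimately show thesis by (rule that)
qed

lemma cube_minor3_shatters:
  assumes "cube_minor V 3"
  obtains s0 s1 s2 where "distinct [s0, s1, s2]" "shatters V {s0, s1, s2}"
proof -
  obtain fs \<phi> where \<phi>: "bij_betw \<phi> (fold contract fs V) (Pow {0..<3})"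
    "\<forall>u\<in>fold contract fs V. \<forall>v\<in>fold contract fs V. hadj u v \<longleftrightarrow> hadj (\<phi> u) (\<phi> v)"
    using assms unfolding cube_minor_def graph_iso_def cube_def by blast
  define \<psi> where "\<psi> = inv_into (fold contract fs V) \<phi>"
  have \<psi>: "bij_betw \<psi> (Pow {0..<3}) (fold contract fs V)"
    unfolding \<psi>_def by (rule bij_betw_inv_into[OF \<phi>(1)])
  have "hadj (\<psi> A) (\<psi> B)" if "A \<subseteq> {0..<3}" "B \<subseteq> {0..<3}" "hadj A B" for A B
  proof -
    have "\<psi> A \<in> fold contract fs V" "\<psi> B \<in> fold contract fs V"
      using that(1,2) bij_betw_apply[OF \<psi>] by blast+
    moreover have "\<phi> (\<psi> A) = A" "\<phi> (\<psi> B) = B"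
      using that(1,2) bij_betw_inv_into_right[OF \<phi>(1)] unfolding \<psi>_def by blast+
    ultimately show ?thesis using \<phi>(2) that(3) by simp
  qed
  with bij_betw_imp_inj_on[OF \<psi>] obtain s0 s1 s2
    where "distinct [s0, s1, s2]" and shatters: "shatters (\<psi> ` Pow {0..<3}) {s0, s1, s2}"
    by (rule cube3_embedding_shatters)
  have "\<psi> ` Pow {0..<3} = (\<lambda>v. v - set fs) ` V"
    unfolding fold_contract[symmetric] using \<psi> by (rule bij_betw_imp_surj_on)
  with shatters have "shatters V {s0, s1, s2}" by (metis shatters_contract)
  with \<open>distinct [s0, s1, s2]\<close> show thesis by (rule that)
qed

lemma extend_shattered_triple4:
  fixes w :: "bool \<Rightarrow> bool \<Rightarrow> bool \<Rightarrow> bool \<Rightarrow> bool"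
  assumes "\<forall>a b c d. w a b c d \<longrightarrow> w (\<not>a) (\<not>b) (\<not>c) (\<not>d)"
    and "\<forall>a b c d. w a b c d \<longrightarrow> w (\<not>a) (\<not>b) c d \<longrightarrow> w (\<not>a) b c d \<or> w a (\<not>b) c d"
    and "\<forall>b c d. \<exists>a. w a b c d" "\<exists>b c d. w True b c d" "\<exists>b c d. w False b c d"
  shows "(\<forall>a b c. \<exists>d. w a b c d) \<or> (\<forall>a b d. \<exists>c. w a b c d) \<or> (\<forall>a c d. \<exists>b. w a b c d)"
  using assms
  apply (simp only: all_bool_eq ex_bool_eq not_True_eq_False not_False_eq_True)
  apply sat
  done

lemma split_wall4:
  fixes w :: "bool \<Rightarrow> bool \<Rightarrow> bool \<Rightarrow> bool \<Rightarrow> bool"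
  assumes "\<forall>a b c d. w a b c d \<longrightarrow> w (\<not>a) (\<not>b) (\<not>c) (\<not>d)"
    and "\<exists>a b c d. \<not> w a b c d"
    and "\<forall>a b c. \<exists>d. w a b c d"
    and "w s1 s2 s3 True" "w s1 (\<not>s2) s3 True" "w s1 s2 s3 False" "w s1 (\<not>s2) s3 False"
  shows "(\<forall>a b d. \<exists>c. w a b c d) \<and> (\<exists>t. \<forall>c. w s1 s2 c t \<and> w s1 (\<not>s2) c t \<longrightarrow> c = s3)"
  using assms
  apply (simp only: all_bool_eq ex_bool_eq)
  apply (cases s1; cases s2; cases s3)
  apply (simp_all only: simp_thms not_True_eq_False not_False_eq_True)
  apply sat+
  done

lemma split_orthant4:
  fixes w :: "bool \<Rightarrow> bool \<Rightarrow> bool \<Rightarrow> bool \<Rightarrow> bool"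
  assumes "\<forall>a b c d. w a b c d \<longrightarrow> w (\<not>a) (\<not>b) (\<not>c) (\<not>d)"
    and "\<forall>a b c d. w a b c d \<longrightarrow> w (\<not>a) b c (\<not>d) \<longrightarrow> w (\<not>a) b c d \<or> w a b c (\<not>d)"
    and "\<forall>a b c d. w a b c d \<longrightarrow> w a b (\<not>c) (\<not>d) \<longrightarrow> w a b (\<not>c) d \<or> w a b c (\<not>d)"
    and "\<forall>a b c. \<exists>d. w a b c d"
    and "w s1 s2 s3 True" "w s1 s2 s3 False"
    and "\<not> (w s1 s2 s3 True \<and> w s1 (\<not>s2) s3 True \<and> w s1 s2 s3 False \<and> w s1 (\<not>s2) s3 False)"
  shows "(\<forall>a c d. \<exists>b. w a b c d) \<and> (\<exists>c. \<forall>b. w s1 b s3 c \<longrightarrow> b = s2)"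
  using assms
  apply (simp only: all_bool_eq ex_bool_eq)
  apply (cases s1; cases s2; cases s3)
  apply (simp_all only: simp_thms not_True_eq_False not_False_eq_True)
  apply sat+
  done

lemma full_projection5:
  fixes w :: "bool \<Rightarrow> bool \<Rightarrow> bool \<Rightarrow> bool \<Rightarrow> bool \<Rightarrow> bool"
  assumes "\<forall>a b c d e. w a b c d e \<longrightarrow> w (\<not>a) (\<not>b) (\<not>c) (\<not>d) (\<not>e)"
    and "\<forall>a b c d e. w a b c d e \<longrightarrow> w (\<not>a) (\<not>b) c d e \<longrightarrow> w (\<not>a) b c d e \<or> w a (\<not>b) c d e"
    and "\<forall>a b c d e. w a b c d e \<longrightarrow> w a b (\<not>c) (\<not>d) e \<longrightarrow> w a b (\<not>c) d e \<or> w a b c (\<not>d) e"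
    and "w s1 s2 s3 (\<not>c) j" "w s1 (\<not>s2) s3 (\<not>c) j"
    and "\<forall>d. \<not> (w s1 s2 s3 d (\<not>j) \<and> w s1 (\<not>s2) s3 d (\<not>j))"
    and "\<forall>e. \<not> w s1 (\<not>s2) s3 c e"
    and "\<forall>e. w s1 s2 s3 c e \<and> w s1 s2 (\<not>s3) c e"
    and "w s1 s2 s3 (\<not>c) (\<not>j)" "w s1 s2 (\<not>s3) (\<not>c) (\<not>j)"
  shows "\<forall>a c d e. \<exists>b. w a b c d e"
  using assms
  apply (simp only: all_bool_eq ex_bool_eq)
  apply (cases s1; cases s2; cases s3; cases c; cases j)
  apply (simp_all only: simp_thms not_True_eq_False not_False_eq_True)
  done

definition patterns :: "nat set set \<Rightarrow> nat list \<Rightarrow> bool list set" where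
  "patterns V cs = (\<lambda>v. map (\<lambda>c. c \<in> v) cs) ` V"

lemma mem_patterns_iff: "p \<in> patterns V cs \<longleftrightarrow> (\<exists>v\<in>V. p = map (\<lambda>c. c \<in> v) cs)"
  by (auto simp: patterns_def)

lemma map_mem_patterns: "v \<in> V \<Longrightarrow> map (\<lambda>c. c \<in> v) cs \<in> patterns V cs"
  unfolding patterns_def by (rule imageI)

definition shatters3 :: "nat set set \<Rightarrow> nat \<Rightarrow> nat \<Rightarrow> nat \<Rightarrow> bool" where
  "shatters3 V x y z \<longleftrightarrow> (\<forall>p q r. \<exists>v\<in>V. (x \<in> v) = p \<and> (y \<in> v) = q \<and> (z \<in> v) = r)"

definition orthant :: "nat set set \<Rightarrow> nat \<Rightarrow> nat \<Rightarrow> nat \<Rightarrow> bool \<Rightarrow> bool \<Rightarrow> bool \<Rightarrow> nat set set" where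
  "orthant V x y z p q r = {v \<in> V. (x \<in> v) = p \<and> (y \<in> v) = q \<and> (z \<in> v) = r}"

definition wall :: "nat set set \<Rightarrow> nat \<Rightarrow> nat \<Rightarrow> nat \<Rightarrow> bool \<Rightarrow> bool \<Rightarrow> bool \<Rightarrow> nat set set" where
  "wall V x y z p q r = {v \<in> orthant V x y z p q r. flip y v \<in> V}"

lemma shatters3E:
  assumes "shatters3 V x y z"
  obtains v where "v \<in> V" "(x \<in> v) = p" "(y \<in> v) = q" "(z \<in> v) = r"
  using assms[unfolded shatters3_def, rule_format, of p q r] that by blast

lemma shatters3_distinct:
  assumes "shatters3 V x y z"
  shows "distinct [x, y, z]"
proof -
  obtain v where "v \<in> V" "(x \<in> v) = True" "(y \<in> v) = False" "(z \<in> v) = True"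
    using assms by (rule shatters3E)
  moreover obtain v' where "v' \<in> V" "(x \<in> v') = True" "(y \<in> v') = True" "(z \<in> v') = False"
    using assms by (rule shatters3E)
  ultimately show ?thesis by auto
qed

lemma shatters_imp_shatters3:
  assumes "shatters V S" "x \<in> S" "y \<in> S" "z \<in> S" "distinct [x, y, z]"
  shows "shatters3 V x y z"
  unfolding shatters3_def
proof (intro allI)
  fix p q r
  obtain v where v: "v \<in> V" "\<forall>i\<in>S. (i \<in> v) = (if i = x then p else if i = y then q else r)"
    using assms(1)[unfolded shatters_def, rule_format, of "\<lambda>i. if i = x then p else if i = y then q else r"]
    by blast
  then have "(x \<in> v) = p \<and> (y \<in> v) = q \<and> (z \<in> v) = r" using assms(2-5) by auto
  with v(1) show "\<exists>v\<in>V. (x \<in> v) = p \<and> (y \<in> v) = q \<and> (z \<in> v) = r" by blast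
qed

lemma shatters3I:
  "(\<And>p q r. \<exists>v\<in>V. (x \<in> v) = p \<and> (y \<in> v) = q \<and> (z \<in> v) = r) \<Longrightarrow> shatters3 V x y z"
  by (simp add: shatters3_def)

lemma two_elements:
  assumes "finite A" "A \<noteq> {}" "card A \<noteq> 1"
  obtains x y where "x \<in> A" "y \<in> A" "x \<noteq> y"
proof -
  have "\<not> card A \<le> Suc 0" using assms by (simp add: le_Suc_eq)
  then show thesis using that card_le_Suc0_iff_eq[OF assms(1)] by blast
qed

locale antipodal_rank_le3 =
  fixes n :: nat and V :: "nat set set"
  assumes subset_cube: "V \<subseteq> Pow {0..<n}"
    and geodesic: "\<And>u w. u \<in> V \<Longrightarrow> w \<in> V \<Longrightarrow>
      \<exists>xs. walk V xs \<and> hd xs = u \<and> last xs = w \<and> length xs = Suc (hdist u w)"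
    and complement_mem: "\<And>v. v \<in> V \<Longrightarrow> {0..<n} - v \<in> V"
    and not_shatters_4: "\<And>S. card S = 4 \<Longrightarrow> \<not> shatters V S"
begin

lemma finite_V: "finite V"
  using subset_cube by (rule finite_subset) simp

lemma vertex_subset: "v \<in> V \<Longrightarrow> v \<subseteq> {0..<n}"
  using subset_cube by blast

lemma finite_vertex: "v \<in> V \<Longrightarrow> finite v"
  using vertex_subset finite_subset by blast

lemma walk_nth_mem: "walk V xs \<Longrightarrow> i < length xs \<Longrightarrow> xs ! i \<in> V"
  by (auto simp: walk_def)

lemma walk_hdist_le:
  assumes "walk V xs" "i \<le> j" "j < length xs"
  shows "hdist (xs ! i) (xs ! j) \<le> j - i"
  using assms(2,3)
proof (induction j)
  case 0
  then show ?case by simp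
next
  case (Suc j)
  show ?case
  proof (cases "i = Suc j")
    case False
    then have ij: "i \<le> j" using Suc by simp
    have "hadj (xs ! j) (xs ! Suc j)" using assms(1) Suc by (simp add: walk_def)
    then have "hdist (xs ! j) (xs ! Suc j) = 1" by (simp add: hadj_def)
    moreover have "hdist (xs ! i) (xs ! Suc j) \<le> hdist (xs ! i) (xs ! j) + hdist (xs ! j) (xs ! Suc j)"
      using walk_nth_mem[OF assms(1)] Suc ij by (intro hdist_triangle finite_vertex) auto
    ultimately show ?thesis using Suc ij by simp
  qed simp
qed

lemma geodesic_keeps_agreement:
  assumes "walk V xs" "hd xs = u" "last xs = w" "length xs = Suc (hdist u w)"
    and "i < length xs" "c \<in> u \<longleftrightarrow> c \<in> w"
  shows "c \<in> xs ! i \<longleftrightarrow> c \<in> u"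
proof (rule ccontr)
  assume neq: "\<not> (c \<in> xs ! i \<longleftrightarrow> c \<in> u)"
  have ne: "xs \<noteq> []" using assms(1) by (simp add: walk_def)
  have u: "u = xs ! 0" and w: "w = xs ! (length xs - 1)"
    using assms(2,3) ne by (simp_all add: hd_conv_nth last_conv_nth)
  have "u \<in> V" "w \<in> V" "xs ! i \<in> V"
    using u w assms(5) walk_nth_mem[OF assms(1)] ne by auto
  then have "hdist u w + 2 \<le> hdist u (xs ! i) + hdist (xs ! i) w"
    using neq assms(6) by (intro hdist_detour finite_vertex) auto
  moreover have "hdist u (xs ! i) \<le> i"
    using walk_hdist_le[OF assms(1), of 0 i] u assms(5) by simp
  moreover have "hdist (xs ! i) w \<le> length xs - 1 - i"
    using walk_hdist_le[OF assms(1), of i "length xs - 1"] w assms(5) by simp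
  ultimately show False using assms(4,5) by linarith
qed

text \<open>Along a geodesic from u to w, the first step leaving the sign pattern of u on S crosses
  a coordinate separating u from w.\<close>

lemma exists_edge_leaving_pattern:
  assumes "u \<in> V" "w \<in> V" "t0 \<in> S" "t0 \<in> u \<longleftrightarrow> t0 \<notin> w"
  obtains v t where "v \<in> V" "t \<in> S" "\<forall>i\<in>S. i \<in> v \<longleftrightarrow> i \<in> u" "flip t v \<in> V" "t \<in> u \<longleftrightarrow> t \<notin> w"
proof -
  obtain xs where xs: "walk V xs" "hd xs = u" "last xs = w" "length xs = Suc (hdist u w)"
    using geodesic assms(1,2) by blast
  have ne: "xs \<noteq> []" using xs(1) by (simp add: walk_def)
  define P where "P k \<longleftrightarrow> (\<exists>c\<in>S. c \<in> xs ! k \<longleftrightarrow> c \<notin> u)" for k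
  have "P (length xs - 1)"
    using assms(3,4) xs(3) ne unfolding P_def by (auto simp: last_conv_nth)
  moreover have "\<not> P 0" using xs(2) ne unfolding P_def by (auto simp: hd_conv_nth)
  ultimately obtain k where k: "k < length xs - 1" "\<not> P k" "P (Suc k)"
    using ex_least_nat_less[of P "length xs - 1"] by blast
  define v where "v = xs ! k"
  have "hadj v (xs ! Suc k)" using xs(1) k(1) unfolding v_def walk_def by simp
  then obtain t where step: "xs ! Suc k = flip t v" by (rule hadj_imp_flip)
  have v: "v \<in> V" "\<forall>i\<in>S. i \<in> v \<longleftrightarrow> i \<in> u"
    using walk_nth_mem[OF xs(1)] k(1,2) unfolding v_def P_def by auto
  obtain c where c: "c \<in> S" "c \<in> xs ! Suc k \<longleftrightarrow> c \<notin> u" using k(3) unfolding P_def by blast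
  then have "c = t" using v(2) unfolding step by (auto simp: mem_flip_iff split: if_splits)
  have "flip t v \<in> V" using walk_nth_mem[OF xs(1), of "Suc k"] k(1) step by simp
  moreover have "t \<in> u \<longleftrightarrow> t \<notin> w"
  proof (rule ccontr)
    assume "\<not> (t \<in> u \<longleftrightarrow> t \<notin> w)"
    then have "t \<in> xs ! Suc k \<longleftrightarrow> t \<in> u"
      using geodesic_keeps_agreement[OF xs, of "Suc k" t] k(1) by simp
    then show False using c \<open>c = t\<close> by simp
  qed
  ultimately show thesis using that v c(1) \<open>c = t\<close> by blast
qed

lemma exists_edge_across:
  assumes "u \<in> V" "w \<in> V" "x \<in> S" "x \<in> u \<longleftrightarrow> x \<notin> w" "\<forall>i\<in>S - {x}. i \<in> u \<longleftrightarrow> i \<in> w"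
  shows "\<exists>v\<in>V. (\<forall>i\<in>S. i \<in> v \<longleftrightarrow> i \<in> u) \<and> flip x v \<in> V"
proof -
  obtain v t where "v \<in> V" "t \<in> S" "\<forall>i\<in>S. i \<in> v \<longleftrightarrow> i \<in> u" "flip t v \<in> V" "t \<in> u \<longleftrightarrow> t \<notin> w"
    using exists_edge_leaving_pattern[OF assms(1-4)] by blast
  moreover have "t = x" using calculation(2,5) assms(5) by blast
  ultimately show ?thesis by blast
qed

lemma patterns_antipodal:
  assumes "set cs \<subseteq> {0..<n}" "p \<in> patterns V cs"
  shows "map Not p \<in> patterns V cs"
proof -
  obtain v where v: "v \<in> V" "p = map (\<lambda>c. c \<in> v) cs" using assms(2) by (auto simp: mem_patterns_iff)
  have "map Not p = map (\<lambda>c. c \<in> {0..<n} - v) cs" using assms(1) unfolding v(2) by auto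
  then show ?thesis using map_mem_patterns[OF complement_mem[OF v(1)]] by simp
qed

lemma patterns_square:
  assumes "distinct cs" "i < length cs" "j < length cs" "i \<noteq> j"
    and "p \<in> patterns V cs" "p[i := \<not> p ! i, j := \<not> p ! j] \<in> patterns V cs"
  shows "p[i := \<not> p ! i] \<in> patterns V cs \<or> p[j := \<not> p ! j] \<in> patterns V cs"
proof -
  obtain u where u: "u \<in> V" "p = map (\<lambda>c. c \<in> u) cs"
    using assms(5) by (auto simp: mem_patterns_iff)
  obtain w where w: "w \<in> V" "p[i := \<not> p ! i, j := \<not> p ! j] = map (\<lambda>c. c \<in> w) cs"
    using assms(6) by (auto simp: mem_patterns_iff)
  have w_iff: "cs ! l \<in> w \<longleftrightarrow> (cs ! l \<in> u \<longleftrightarrow> l \<notin> {i, j})" if "l < length cs" for l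
  proof -
    have "(cs ! l \<in> w) = p[i := \<not> p ! i, j := \<not> p ! j] ! l" using w(2) that by simp
    then show ?thesis using that assms(2-4) u(2) by (auto simp: nth_list_update)
  qed
  have "cs ! i \<in> u \<longleftrightarrow> cs ! i \<notin> w" using w_iff[OF assms(2)] by simp
  then obtain v t where vt: "v \<in> V" "t \<in> set cs" "\<forall>c\<in>set cs. c \<in> v \<longleftrightarrow> c \<in> u"
      "flip t v \<in> V" "t \<in> u \<longleftrightarrow> t \<notin> w"
    using exists_edge_leaving_pattern[OF u(1) w(1) nth_mem[OF assms(2)]] by blast
  obtain l where l: "l < length cs" "t = cs ! l" using vt(2) by (auto simp: in_set_conv_nth)
  have "l \<in> {i, j}" using w_iff[OF l(1)] vt(5) l(2) by auto
  have eq: "map (\<lambda>c. c \<in> flip t v) cs = p[l := \<not> p ! l]"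
  proof (rule nth_equalityI)
    show "length (map (\<lambda>c. c \<in> flip t v) cs) = length (p[l := \<not> p ! l])" using u(2) by simp
    fix m assume "m < length (map (\<lambda>c. c \<in> flip t v) cs)"
    then have m: "m < length cs" by simp
    have "cs ! m = cs ! l \<longleftrightarrow> m = l" using assms(1) m l(1) by (simp add: nth_eq_iff_index_eq)
    then show "map (\<lambda>c. c \<in> flip t v) cs ! m = p[l := \<not> p ! l] ! m"
      using m l vt(3) nth_mem[OF m] u(2) by (auto simp: mem_flip_iff nth_list_update)
  qed
  have "p[l := \<not> p ! l] \<in> patterns V cs" using map_mem_patterns[OF vt(4), of cs] unfolding eq .
  with \<open>l \<in> {i, j}\<close> show ?thesis by blast
qed

lemma shatters3_lt:
  assumes "shatters3 V x y z"
  shows "x < n" "y < n" "z < n"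
proof -
  obtain v where "v \<in> V" "(x \<in> v) = True" "(y \<in> v) = True" "(z \<in> v) = True"
    using assms by (rule shatters3E)
  then have "v \<subseteq> {0..<n}" "x \<in> v" "y \<in> v" "z \<in> v" using vertex_subset by auto
  then show "x < n" "y < n" "z < n" by auto
qed

lemma finite_orthant: "finite (orthant V x y z p q r)"
  using finite_V unfolding orthant_def by simp

lemma finite_wall: "finite (wall V x y z p q r)"
  using finite_orthant unfolding wall_def by simp

lemma wall_nonempty:
  assumes "shatters3 V x y z"
  shows "wall V x y z p q r \<noteq> {}"
proof -
  obtain u where u: "u \<in> V" "(x \<in> u) = p" "(y \<in> u) = q" "(z \<in> u) = r"
    using assms by (rule shatters3E)
  obtain w where w: "w \<in> V" "(x \<in> w) = p" "(y \<in> w) = (\<not> q)" "(z \<in> w) = r"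
    using assms by (rule shatters3E)
  have "y \<in> {x, y, z}" "y \<in> u \<longleftrightarrow> y \<notin> w" "\<forall>i\<in>{x, y, z} - {y}. i \<in> u \<longleftrightarrow> i \<in> w"
    using u w by auto
  from exists_edge_across[OF u(1) w(1) this] obtain v
    where "v \<in> V" "\<forall>i\<in>{x, y, z}. i \<in> v \<longleftrightarrow> i \<in> u" "flip y v \<in> V" by blast
  then have "v \<in> wall V x y z p q r" using u unfolding wall_def orthant_def by auto
  then show ?thesis by blast
qed

lemma singleton_orthant_degree:
  assumes "shatters3 V e a b" "orthant V e a b s1 s2 s3 = {v}"
  shows "degree V v = 3" "flip e v \<in> V"
proof -
  have v: "v \<in> V" "(e \<in> v) = s1" "(a \<in> v) = s2" "(b \<in> v) = s3"
    using assms(2) unfolding orthant_def by auto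
  have uniq: "u = v" if "u \<in> V" "\<forall>i\<in>{e, a, b}. i \<in> u \<longleftrightarrow> i \<in> v" for u
    using assms(2) that v unfolding orthant_def by auto
  have dist: "distinct [e, a, b]" using assms(1) by (rule shatters3_distinct)
  have flip_mem: "flip x v \<in> V" if x: "x \<in> {e, a, b}" for x
  proof -
    obtain w where w: "w \<in> V" "(e \<in> w) = ((e \<in> v) \<noteq> (e = x))" "(a \<in> w) = ((a \<in> v) \<noteq> (a = x))"
        "(b \<in> w) = ((b \<in> v) \<noteq> (b = x))"
      using assms(1) by (rule shatters3E)
    have "x \<in> v \<longleftrightarrow> x \<notin> w" "\<forall>i\<in>{e, a, b} - {x}. i \<in> v \<longleftrightarrow> i \<in> w" using x w by auto
    from exists_edge_across[OF v(1) w(1) x this] obtain v'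
      where "v' \<in> V" "\<forall>i\<in>{e, a, b}. i \<in> v' \<longleftrightarrow> i \<in> v" "flip x v' \<in> V" by blast
    then show ?thesis using uniq by blast
  qed
  have "{u \<in> V. hadj u v} = {flip e v, flip a v, flip b v}"
  proof (intro equalityI subsetI)
    fix u assume "u \<in> {u \<in> V. hadj u v}"
    then have u: "u \<in> V" "hadj v u" using hadj_commute by auto
    obtain t where t: "u = flip t v" using u(2) by (rule hadj_imp_flip)
    have "t \<in> {e, a, b}"
    proof (rule ccontr)
      assume "t \<notin> {e, a, b}"
      then have "u = v" using uniq[OF u(1)] t by (auto simp: mem_flip_iff)
      then show False using t flip_neq by metis
    qed
    then show "u \<in> {flip e v, flip a v, flip b v}" using t by auto
  next
    fix u assume "u \<in> {flip e v, flip a v, flip b v}"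
    then show "u \<in> {u \<in> V. hadj u v}" using flip_mem hadj_flip hadj_commute by auto
  qed
  moreover have "card {flip e v, flip a v, flip b v} = 3" using dist by simp
  ultimately show "degree V v = 3" unfolding degree_def by simp
  show "flip e v \<in> V" by (rule flip_mem) simp
qed

lemma missing_pattern4:
  assumes "distinct [c1, c2, c3, c4]"
  obtains p1 p2 p3 p4 where "[p1, p2, p3, p4] \<notin> patterns V [c1, c2, c3, c4]"
proof -
  have "\<not> shatters V {c1, c2, c3, c4}" using assms by (intro not_shatters_4) simp
  then obtain s where s: "\<forall>v\<in>V. \<not> (\<forall>i\<in>{c1, c2, c3, c4}. (i \<in> v) = s i)"
    unfolding shatters_def by auto
  have "[s c1, s c2, s c3, s c4] \<notin> patterns V [c1, c2, c3, c4]"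
  proof
    assume "[s c1, s c2, s c3, s c4] \<in> patterns V [c1, c2, c3, c4]"
    then have "\<exists>v\<in>V. s c1 = (c1 \<in> v) \<and> s c2 = (c2 \<in> v) \<and> s c3 = (c3 \<in> v) \<and> s c4 = (c4 \<in> v)"
      by (auto simp: mem_patterns_iff)
    then obtain v where "v \<in> V" "s c1 = (c1 \<in> v)" "s c2 = (c2 \<in> v)" "s c3 = (c3 \<in> v)" "s c4 = (c4 \<in> v)"
      by blast
    then show False using s by auto
  qed
  then show thesis by (rule that)
qed

lemma edge_of_patterns:
  assumes "distinct cs" "i < length cs" "p \<in> patterns V cs" "p[i := \<not> p ! i] \<in> patterns V cs"
  obtains v where "v \<in> V" "map (\<lambda>c. c \<in> v) cs = p" "flip (cs ! i) v \<in> V"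
proof -
  obtain u where u: "u \<in> V" "p = map (\<lambda>c. c \<in> u) cs"
    using assms(3) unfolding mem_patterns_iff by blast
  obtain w where w: "w \<in> V" "p[i := \<not> p ! i] = map (\<lambda>c. c \<in> w) cs"
    using assms(4) unfolding mem_patterns_iff by blast
  have w_iff: "cs ! l \<in> w \<longleftrightarrow> (cs ! l \<in> u \<longleftrightarrow> l \<noteq> i)" if "l < length cs" for l
  proof -
    have "(cs ! l \<in> w) = p[i := \<not> p ! i] ! l" using w(2) that by simp
    then show ?thesis using that assms(2) u(2) by (auto simp: nth_list_update)
  qed
  have "cs ! i \<in> set cs" "cs ! i \<in> u \<longleftrightarrow> cs ! i \<notin> w" using w_iff[OF assms(2)] assms(2) by auto
  moreover have "\<forall>c\<in>set cs - {cs ! i}. c \<in> u \<longleftrightarrow> c \<in> w"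
    using w_iff by (auto simp: in_set_conv_nth)
  ultimately obtain v where "v \<in> V" "\<forall>c\<in>set cs. c \<in> v \<longleftrightarrow> c \<in> u" "flip (cs ! i) v \<in> V"
    using exists_edge_across[OF u(1) w(1)] by blast
  moreover have "map (\<lambda>c. c \<in> v) cs = p" using calculation(2) u(2) by simp
  ultimately show thesis using that by blast
qed

lemma shatters3_through:
  assumes "u \<in> V" "e \<in> u" "u' \<in> V" "e \<notin> u'" "distinct [t0, t1, t2]" "shatters V {t0, t1, t2}"
  obtains a b where "shatters3 V e a b"
proof (cases "e \<in> {t0, t1, t2}")
  case True
  then consider "e = t0" | "e = t1" | "e = t2" by blast
  then show thesis
  proof cases
    case 1
    then have "shatters3 V e t1 t2" using assms(5) by (intro shatters_imp_shatters3[OF assms(6)]) auto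
    then show thesis by (rule that)
  next
    case 2
    then have "shatters3 V e t0 t2" using assms(5) by (intro shatters_imp_shatters3[OF assms(6)]) auto
    then show thesis by (rule that)
  next
    case 3
    then have "shatters3 V e t0 t1" using assms(5) by (intro shatters_imp_shatters3[OF assms(6)]) auto
    then show thesis by (rule that)
  qed
next
  case False
  have dist: "distinct [e, t0, t1, t2]" using False assms(5) by auto
  have t: "shatters3 V t0 t1 t2" using assms(5) by (intro shatters_imp_shatters3[OF assms(6)]) auto
  have "u \<subseteq> {0..<n}" using assms(1) by (rule vertex_subset)
  then have lt: "set [e, t0, t1, t2] \<subseteq> {0..<n}" using assms(2) shatters3_lt[OF t] by auto
  let ?w = "\<lambda>p q r s. [p, q, r, s] \<in> patterns V [e, t0, t1, t2]"
  have anti: "\<forall>p q r s. ?w p q r s \<longrightarrow> ?w (\<not>p) (\<not>q) (\<not>r) (\<not>s)"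
    by (auto dest: patterns_antipodal[OF lt])
  have square: "\<forall>p q r s. ?w p q r s \<longrightarrow> ?w (\<not>p) (\<not>q) r s \<longrightarrow> ?w (\<not>p) q r s \<or> ?w p (\<not>q) r s"
    using patterns_square[OF dist, of 0 1 "[_, _, _, _]"] by simp
  have full: "\<forall>q r s. \<exists>p. ?w p q r s"
  proof (intro allI)
    fix q r s
    obtain v where "v \<in> V" "(t0 \<in> v) = q" "(t1 \<in> v) = r" "(t2 \<in> v) = s" using t by (rule shatters3E)
    then have "?w (e \<in> v) q r s" using map_mem_patterns[of v V "[e, t0, t1, t2]"] by simp
    then show "\<exists>p. ?w p q r s" by blast
  qed
  have "\<exists>q r s. ?w True q r s" using map_mem_patterns[OF assms(1), of "[e, t0, t1, t2]"] assms(2) by auto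
  moreover have "\<exists>q r s. ?w False q r s" using map_mem_patterns[OF assms(3), of "[e, t0, t1, t2]"] assms(4) by auto
  ultimately consider (012) "\<forall>p q r. \<exists>s. ?w p q r s" | (013) "\<forall>p q s. \<exists>r. ?w p q r s"
    | (023) "\<forall>p r s. \<exists>q. ?w p q r s"
    using extend_shattered_triple4[OF anti square full] by blast
  then show thesis
  proof cases
    case 012
    have "shatters3 V e t0 t1"
    proof (rule shatters3I)
      fix p q r
      obtain s where "?w p q r s" using 012 by blast
      then show "\<exists>v\<in>V. (e \<in> v) = p \<and> (t0 \<in> v) = q \<and> (t1 \<in> v) = r" by (auto simp: mem_patterns_iff)
    qed
    then show thesis by (rule that)
  next
    case 013
    have "shatters3 V e t0 t2"
    proof (rule shatters3I)
      fix p q s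
      obtain r where "?w p q r s" using 013 by blast
      then show "\<exists>v\<in>V. (e \<in> v) = p \<and> (t0 \<in> v) = q \<and> (t2 \<in> v) = s" by (auto simp: mem_patterns_iff)
    qed
    then show thesis by (rule that)
  next
    case 023
    have "shatters3 V e t1 t2"
    proof (rule shatters3I)
      fix p r s
      obtain q where "?w p q r s" using 023 by blast
      then show "\<exists>v\<in>V. (e \<in> v) = p \<and> (t1 \<in> v) = r \<and> (t2 \<in> v) = s" by (auto simp: mem_patterns_iff)
    qed
    then show thesis by (rule that)
  qed
qed

lemma shrink_wall:
  assumes abc: "shatters3 V e a b"
    and pq: "p \<in> wall V e a b s1 s2 s3" "q \<in> wall V e a b s1 s2 s3" "p \<noteq> q"
  obtains j t where "shatters3 V e a j" "card (wall V e a j s1 s2 t) < card (wall V e a b s1 s2 s3)"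
proof -
  let ?A = "wall V e a b s1 s2 s3"
  obtain j where j: "j \<in> p \<longleftrightarrow> j \<notin> q" using pq(3) by blast
  have p: "p \<in> V" "(e \<in> p) = s1" "(a \<in> p) = s2" "(b \<in> p) = s3" "flip a p \<in> V"
    using pq(1) unfolding wall_def orthant_def by auto
  have q: "q \<in> V" "(e \<in> q) = s1" "(a \<in> q) = s2" "(b \<in> q) = s3" "flip a q \<in> V"
    using pq(2) unfolding wall_def orthant_def by auto
  have dist: "distinct [e, a, b, j]" using j p q shatters3_distinct[OF abc] by auto
  have "p \<subseteq> {0..<n}" "q \<subseteq> {0..<n}" using p(1) q(1) by (simp_all add: vertex_subset)
  then have lt: "set [e, a, b, j] \<subseteq> {0..<n}" using j shatters3_lt[OF abc] by auto
  let ?w = "\<lambda>p1 p2 p3 p4. [p1, p2, p3, p4] \<in> patterns V [e, a, b, j]"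
  have anti: "\<forall>p1 p2 p3 p4. ?w p1 p2 p3 p4 \<longrightarrow> ?w (\<not>p1) (\<not>p2) (\<not>p3) (\<not>p4)"
    by (auto dest: patterns_antipodal[OF lt])
  obtain m1 m2 m3 m4 where "\<not> ?w m1 m2 m3 m4" using dist by (rule missing_pattern4)
  then have missing: "\<exists>p1 p2 p3 p4. \<not> ?w p1 p2 p3 p4" by blast
  have full: "\<forall>p1 p2 p3. \<exists>p4. ?w p1 p2 p3 p4"
  proof (intro allI)
    fix p1 p2 p3
    obtain v where "v \<in> V" "(e \<in> v) = p1" "(a \<in> v) = p2" "(b \<in> v) = p3" using abc by (rule shatters3E)
    then have "?w p1 p2 p3 (j \<in> v)" using map_mem_patterns[of v V "[e, a, b, j]"] by simp
    then show "\<exists>p4. ?w p1 p2 p3 p4" by blast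
  qed
  have "?w s1 s2 s3 (j \<in> p)" "?w s1 (\<not> s2) s3 (j \<in> p)" "?w s1 s2 s3 (j \<in> q)" "?w s1 (\<not> s2) s3 (j \<in> q)"
    using map_mem_patterns[OF p(1), of "[e, a, b, j]"] map_mem_patterns[OF p(5), of "[e, a, b, j]"]
      map_mem_patterns[OF q(1), of "[e, a, b, j]"] map_mem_patterns[OF q(5), of "[e, a, b, j]"] dist
    by (simp_all add: p(2-4) q(2-4) mem_flip_iff)
  then have split: "?w s1 s2 s3 True" "?w s1 (\<not> s2) s3 True" "?w s1 s2 s3 False" "?w s1 (\<not> s2) s3 False"
    using j by (cases "j \<in> p"; simp)+
  obtain t where proj: "\<forall>p1 p2 p4. \<exists>p3. ?w p1 p2 p3 p4"
    and wall_b: "\<forall>c. ?w s1 s2 c t \<and> ?w s1 (\<not> s2) c t \<longrightarrow> c = s3"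
    using split_wall4[OF anti missing full split] by blast
  have shatters_j: "shatters3 V e a j"
  proof (rule shatters3I)
    fix p1 p2 p4
    obtain p3 where "?w p1 p2 p3 p4" using proj by blast
    then show "\<exists>v\<in>V. (e \<in> v) = p1 \<and> (a \<in> v) = p2 \<and> (j \<in> v) = p4" by (auto simp: mem_patterns_iff)
  qed
  obtain x where x: "x \<in> ?A" "(j \<in> x) \<noteq> t" using pq j by (cases "(j \<in> p) = t") auto
  have "wall V e a j s1 s2 t \<subseteq> ?A - {x}"
  proof
    fix v assume "v \<in> wall V e a j s1 s2 t"
    then have v: "v \<in> V" "(e \<in> v) = s1" "(a \<in> v) = s2" "(j \<in> v) = t" "flip a v \<in> V"
      unfolding wall_def orthant_def by auto
    have "?w s1 s2 (b \<in> v) t" "?w s1 (\<not> s2) (b \<in> v) t"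
      using map_mem_patterns[OF v(1), of "[e, a, b, j]"] map_mem_patterns[OF v(5), of "[e, a, b, j]"] dist
      by (simp_all add: v(2-4) mem_flip_iff)
    then have "(b \<in> v) = s3" using wall_b by blast
    then show "v \<in> ?A - {x}" using v x unfolding wall_def orthant_def by auto
  qed
  then have "card (wall V e a j s1 s2 t) \<le> card (?A - {x})" by (intro card_mono) (simp_all add: finite_wall)
  also have "\<dots> < card ?A" using finite_wall x(1) by (rule card_Diff1_less)
  finally show thesis using shatters_j by (rule that[rotated])
qed

lemma exists_singleton_wall:
  assumes "shatters3 V e a b"
  obtains a b s1 s2 s3 where "shatters3 V e a b" "card (wall V e a b s1 s2 s3) = 1"
proof -
  define P where "P m \<longleftrightarrow> (\<exists>a b s1 s2 s3. shatters3 V e a b \<and> card (wall V e a b s1 s2 s3) = m)" for m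
  have "P (card (wall V e a b True True True))" using assms unfolding P_def by blast
  then have "P (Least P)" by (rule LeastI)
  then obtain a' b' s1 s2 s3 where abc: "shatters3 V e a' b'"
    and min: "card (wall V e a' b' s1 s2 s3) = Least P"
    unfolding P_def by blast
  have "card (wall V e a' b' s1 s2 s3) = 1"
  proof (rule ccontr)
    assume "card (wall V e a' b' s1 s2 s3) \<noteq> 1"
    then obtain p q where "p \<in> wall V e a' b' s1 s2 s3" "q \<in> wall V e a' b' s1 s2 s3" "p \<noteq> q"
      by (rule two_elements[OF finite_wall wall_nonempty[OF abc]])
    then obtain j t where "shatters3 V e a' j" "card (wall V e a' j s1 s2 t) < card (wall V e a' b' s1 s2 s3)"
      by (rule shrink_wall[OF abc])
    then have "shatters3 V e a' j" "card (wall V e a' j s1 s2 t) < Least P" using min by simp_all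
    moreover have "P (card (wall V e a' j s1 s2 t))" using calculation(1) unfolding P_def by blast
    ultimately show False using not_less_Least by blast
  qed
  with abc show thesis by (rule that)
qed

lemma square_property:
  assumes "u \<in> V" "w \<in> V" "x \<in> S" "y \<in> S" "x \<in> u \<longleftrightarrow> x \<notin> w" "y \<in> u \<longleftrightarrow> y \<notin> w"
    and "\<forall>i\<in>S - {x, y}. i \<in> u \<longleftrightarrow> i \<in> w"
  shows "\<exists>v\<in>V. \<exists>t\<in>{x, y}. \<forall>i\<in>S. i \<in> v \<longleftrightarrow> (i \<in> u \<longleftrightarrow> i \<noteq> t)"
proof -
  obtain v t where "v \<in> V" "t \<in> S" "\<forall>i\<in>S. i \<in> v \<longleftrightarrow> i \<in> u" "flip t v \<in> V" "t \<in> u \<longleftrightarrow> t \<notin> w"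
    using exists_edge_leaving_pattern[OF assms(1,2,3,5)] by blast
  moreover have "t \<in> {x, y}" using calculation(2,5) assms(7) by blast
  ultimately have "flip t v \<in> V" "t \<in> {x, y}" "\<forall>i\<in>S. i \<in> flip t v \<longleftrightarrow> (i \<in> u \<longleftrightarrow> i \<noteq> t)"
    by (auto simp: mem_flip_iff)
  then show ?thesis by blast
qed

lemma exists_proper_suborthant:
  assumes abc: "shatters3 V e a b" and z: "wall V e a b s1 s2 s3 = {z}"
    and big: "card (orthant V e a b s1 s2 s3) \<noteq> 1"
  obtains k c where "k \<noteq> a" "shatters3 V e b k" "orthant V e b k s1 s3 c \<subset> orthant V e a b s1 s2 s3"
proof -
  let ?R = "orthant V e a b s1 s2 s3"
  have "z \<in> ?R" using z unfolding wall_def by blast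
  then obtain v0 v1 where v01: "v0 \<in> ?R" "v1 \<in> ?R" "v0 \<noteq> v1"
    using two_elements[OF finite_orthant _ big] by blast
  obtain k where k: "k \<in> v0 \<longleftrightarrow> k \<notin> v1" using v01(3) by blast
  have v0: "v0 \<in> V" "(e \<in> v0) = s1" "(a \<in> v0) = s2" "(b \<in> v0) = s3"
    and v1: "v1 \<in> V" "(e \<in> v1) = s1" "(a \<in> v1) = s2" "(b \<in> v1) = s3"
    using v01 unfolding orthant_def by auto
  have dist: "distinct [e, a, b, k]" using k v0 v1 shatters3_distinct[OF abc] by auto
  have "v0 \<subseteq> {0..<n}" "v1 \<subseteq> {0..<n}" using v0(1) v1(1) by (simp_all add: vertex_subset)
  then have lt: "set [e, a, b, k] \<subseteq> {0..<n}" using k shatters3_lt[OF abc] by auto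
  let ?w = "\<lambda>p1 p2 p3 p4. [p1, p2, p3, p4] \<in> patterns V [e, a, b, k]"
  have anti: "\<forall>p1 p2 p3 p4. ?w p1 p2 p3 p4 \<longrightarrow> ?w (\<not>p1) (\<not>p2) (\<not>p3) (\<not>p4)"
    by (auto dest: patterns_antipodal[OF lt])
  have square_ek: "\<forall>p1 p2 p3 p4. ?w p1 p2 p3 p4 \<longrightarrow> ?w (\<not>p1) p2 p3 (\<not>p4) \<longrightarrow> ?w (\<not>p1) p2 p3 p4 \<or> ?w p1 p2 p3 (\<not>p4)"
    using patterns_square[OF dist, of 0 3 "[_, _, _, _]"] by simp
  have square_bk: "\<forall>p1 p2 p3 p4. ?w p1 p2 p3 p4 \<longrightarrow> ?w p1 p2 (\<not>p3) (\<not>p4) \<longrightarrow> ?w p1 p2 (\<not>p3) p4 \<or> ?w p1 p2 p3 (\<not>p4)"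
    using patterns_square[OF dist, of 2 3 "[_, _, _, _]"] by simp
  have full: "\<forall>p1 p2 p3. \<exists>p4. ?w p1 p2 p3 p4"
  proof (intro allI)
    fix p1 p2 p3
    obtain v where "v \<in> V" "(e \<in> v) = p1" "(a \<in> v) = p2" "(b \<in> v) = p3" using abc by (rule shatters3E)
    then have "?w p1 p2 p3 (k \<in> v)" using map_mem_patterns[of v V "[e, a, b, k]"] by simp
    then show "\<exists>p4. ?w p1 p2 p3 p4" by blast
  qed
  have "?w s1 s2 s3 (k \<in> v0)" "?w s1 s2 s3 (k \<in> v1)"
    using map_mem_patterns[OF v0(1), of "[e, a, b, k]"] map_mem_patterns[OF v1(1), of "[e, a, b, k]"]
    by (simp_all add: v0(2-4) v1(2-4))
  then have split: "?w s1 s2 s3 True" "?w s1 s2 s3 False" using k by (cases "k \<in> v0"; simp)+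
  have wall_k: "(k \<in> z) = d" if "?w s1 s2 s3 d" "?w s1 (\<not> s2) s3 d" for d
  proof -
    have flipped: "[s1, s2, s3, d][1 := \<not> [s1, s2, s3, d] ! 1] \<in> patterns V [e, a, b, k]"
      using that(2) by simp
    have "1 < length [e, a, b, k]" by simp
    from edge_of_patterns[OF dist this that(1) flipped] obtain x where "x \<in> V"
      "map (\<lambda>i. i \<in> x) [e, a, b, k] = [s1, s2, s3, d]" "flip ([e, a, b, k] ! 1) x \<in> V" by blast
    then have "x \<in> wall V e a b s1 s2 s3" "(k \<in> x) = d" by (simp_all add: wall_def orthant_def)
    moreover from this(1) have "x = z" using z by blast
    ultimately show ?thesis by simp
  qed
  have not_split: "\<not> (?w s1 s2 s3 True \<and> ?w s1 (\<not> s2) s3 True \<and> ?w s1 s2 s3 False \<and> ?w s1 (\<not> s2) s3 False)"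
  proof
    assume H: "?w s1 s2 s3 True \<and> ?w s1 (\<not> s2) s3 True \<and> ?w s1 s2 s3 False \<and> ?w s1 (\<not> s2) s3 False"
    then have "(k \<in> z) = True" "(k \<in> z) = False" using wall_k by blast+
    then show False by simp
  qed
  obtain c where proj: "\<forall>p1 p3 p4. \<exists>p2. ?w p1 p2 p3 p4" and forced: "\<forall>p2. ?w s1 p2 s3 c \<longrightarrow> p2 = s2"
    using split_orthant4[OF anti square_ek square_bk full split not_split] by blast
  have "k \<noteq> a" using dist by simp
  moreover have "shatters3 V e b k"
  proof (rule shatters3I)
    fix p1 p3 p4
    obtain p2 where "?w p1 p2 p3 p4" using proj by blast
    then show "\<exists>v\<in>V. (e \<in> v) = p1 \<and> (b \<in> v) = p3 \<and> (k \<in> v) = p4" by (auto simp: mem_patterns_iff)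
  qed
  moreover have "orthant V e b k s1 s3 c \<subset> ?R"
  proof
    show "orthant V e b k s1 s3 c \<subseteq> ?R"
    proof
      fix v assume "v \<in> orthant V e b k s1 s3 c"
      then have v: "v \<in> V" "(e \<in> v) = s1" "(b \<in> v) = s3" "(k \<in> v) = c" unfolding orthant_def by auto
      have "?w s1 (a \<in> v) s3 c" using map_mem_patterns[OF v(1), of "[e, a, b, k]"] by (simp add: v(2-4))
      then have "(a \<in> v) = s2" using forced by blast
      then show "v \<in> ?R" using v unfolding orthant_def by auto
    qed
    have "(k \<in> v0) \<noteq> c \<or> (k \<in> v1) \<noteq> c" using k by auto
    then obtain v where "v \<in> ?R" "(k \<in> v) \<noteq> c" using v01(1,2) by blast
    then show "orthant V e b k s1 s3 c \<noteq> ?R" unfolding orthant_def by auto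
  qed
  ultimately show thesis by (rule that)
qed

lemma shatters3_of_split_wall:
  assumes "shatters3 V e b k" "y0 \<in> wall V e b k s1 s3 c" "y1 \<in> wall V e b k s1 s3 c"
    and "j \<in> y0 \<longleftrightarrow> j \<notin> y1"
  shows "shatters3 V e b j"
proof -
  have y0: "y0 \<in> V" "(e \<in> y0) = s1" "(b \<in> y0) = s3" "flip b y0 \<in> V"
    and y1: "y1 \<in> V" "(e \<in> y1) = s1" "(b \<in> y1) = s3" "flip b y1 \<in> V"
    using assms(2,3) unfolding wall_def orthant_def by auto
  have "e \<noteq> b" using shatters3_distinct[OF assms(1)] by simp
  have "j \<noteq> b" using assms(4) y0(3) y1(3) by auto
  have half: "\<exists>v\<in>V. (e \<in> v) = s1 \<and> (b \<in> v) = q \<and> (j \<in> v) = r" for q r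
  proof -
    consider "q = s3" "r = (j \<in> y0)" | "q = s3" "r = (j \<in> y1)"
      | "q \<noteq> s3" "r = (j \<in> y0)" | "q \<noteq> s3" "r = (j \<in> y1)"
      using assms(4) by auto
    then show ?thesis
    proof cases
      case 1
      then show ?thesis using y0 by (intro bexI[of _ y0]) simp_all
    next
      case 2
      then show ?thesis using y1 by (intro bexI[of _ y1]) simp_all
    next
      case 3
      then show ?thesis using y0 \<open>e \<noteq> b\<close> \<open>j \<noteq> b\<close>
        by (intro bexI[of _ "flip b y0"]) (auto simp: mem_flip_iff)
    next
      case 4
      then show ?thesis using y1 \<open>e \<noteq> b\<close> \<open>j \<noteq> b\<close>
        by (intro bexI[of _ "flip b y1"]) (auto simp: mem_flip_iff)
    qed
  qed
  have "y0 \<subseteq> {0..<n}" "y1 \<subseteq> {0..<n}" using y0(1) y1(1) by (simp_all add: vertex_subset)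
  then have lt: "e < n" "b < n" "j < n" using shatters3_lt[OF assms(1)] assms(4) by auto
  show ?thesis
  proof (rule shatters3I)
    fix p q r
    show "\<exists>v\<in>V. (e \<in> v) = p \<and> (b \<in> v) = q \<and> (j \<in> v) = r"
    proof (cases "p = s1")
      case True
      then show ?thesis using half[of q r] by simp
    next
      case False
      obtain v where v: "v \<in> V" "(e \<in> v) = s1" "(b \<in> v) = (\<not> q)" "(j \<in> v) = (\<not> r)"
        using half[of "\<not> q" "\<not> r"] by blast
      then show ?thesis using complement_mem[OF v(1)] lt False
        by (intro bexI[of _ "{0..<n} - v"]) auto
    qed
  qed
qed

lemma suborthant_through_wall:
  assumes z: "wall V e a b s1 s2 s3 = {z}"
    and sub: "orthant V e b k s1 s3 c \<subseteq> orthant V e a b s1 s2 s3"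
    and y: "y \<in> orthant V e b k s1 s3 c" "(j \<in> y) \<noteq> (j \<in> z)"
    and dist: "distinct [e, a, b, k, j]"
  shows "orthant V e b j s1 s3 (j \<notin> z) \<subseteq> orthant V e a b s1 s2 s3"
proof
  fix v assume "v \<in> orthant V e b j s1 s3 (j \<notin> z)"
  then have v: "v \<in> V" "(e \<in> v) = s1" "(b \<in> v) = s3" "(j \<in> v) = (j \<notin> z)"
    unfolding orthant_def by auto
  have y': "y \<in> V" "(e \<in> y) = s1" "(a \<in> y) = s2" "(b \<in> y) = s3" "(k \<in> y) = c" "(j \<in> y) = (j \<notin> z)"
    using y sub unfolding orthant_def by auto
  have "(a \<in> v) = s2"
  proof (rule ccontr)
    assume va: "(a \<in> v) \<noteq> s2"
    then have vk: "(k \<in> v) \<noteq> c" using sub v unfolding orthant_def by auto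
    let ?S = "{e, a, b, k, j}"
    have "a \<in> ?S" "k \<in> ?S" "a \<in> y \<longleftrightarrow> a \<notin> v" "k \<in> y \<longleftrightarrow> k \<notin> v" "\<forall>i\<in>?S - {a, k}. i \<in> y \<longleftrightarrow> i \<in> v"
      using y' v va vk by auto
    from square_property[OF y'(1) v(1) this] obtain v' t
      where v': "v' \<in> V" "t \<in> {a, k}" "\<forall>i\<in>?S. i \<in> v' \<longleftrightarrow> (i \<in> y \<longleftrightarrow> i \<noteq> t)" by blast
    show False
    proof (cases "t = a")
      case True
      then have "v' \<in> orthant V e b k s1 s3 c" "(a \<in> v') \<noteq> s2"
        using v' y' dist unfolding orthant_def by auto
      then show False using sub unfolding orthant_def by auto
    next
      case False
      then have "t = k" using v'(2) by simp
      then have "a \<in> ?S" "a \<in> v' \<longleftrightarrow> a \<notin> v" "\<forall>i\<in>?S - {a}. i \<in> v' \<longleftrightarrow> i \<in> v"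
        using v' y' v va vk dist by auto
      from exists_edge_across[OF v'(1) v(1) this] obtain x
        where "x \<in> V" "\<forall>i\<in>?S. i \<in> x \<longleftrightarrow> i \<in> v'" "flip a x \<in> V" by blast
      then have "x \<in> wall V e a b s1 s2 s3" "(j \<in> x) \<noteq> (j \<in> z)"
        using v' y' \<open>t = k\<close> dist unfolding wall_def orthant_def by auto
      then show False using z by auto
    qed
  qed
  then show "v \<in> orthant V e a b s1 s2 s3" using v unfolding orthant_def by auto
qed

lemma suborthant_wall_side:
  assumes abc: "shatters3 V e a b" and z: "wall V e a b s1 s2 s3 = {z}"
    and sub: "orthant V e b k s1 s3 c \<subseteq> orthant V e a b s1 s2 s3"
    and y: "y0 \<in> wall V e b k s1 s3 c" "y1 \<in> wall V e b k s1 s3 c" "j \<in> y0 \<longleftrightarrow> j \<notin> y1"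
    and dist: "distinct [e, a, b, k, j]"
    and inner: "orthant V e b j s1 s3 (j \<notin> z) \<subseteq> orthant V e a b s1 s2 s3"
    and v: "v \<in> wall V e b j s1 s3 (j \<notin> z)"
  shows "(k \<in> v) = c"
proof (rule ccontr)
  assume kv: "(k \<in> v) \<noteq> c"
  have z': "z \<in> V" "(e \<in> z) = s1" "(a \<in> z) = s2" "(b \<in> z) = s3" "flip a z \<in> V"
    using z unfolding wall_def orthant_def by auto
  have y0: "y0 \<in> V" "(e \<in> y0) = s1" "(b \<in> y0) = s3" "(k \<in> y0) = c" "flip b y0 \<in> V" "(a \<in> y0) = s2"
    and y1: "y1 \<in> V" "(e \<in> y1) = s1" "(b \<in> y1) = s3" "(k \<in> y1) = c" "flip b y1 \<in> V" "(a \<in> y1) = s2"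
    using y(1,2) sub unfolding wall_def orthant_def by auto
  have v': "v \<in> V" "(e \<in> v) = s1" "(b \<in> v) = s3" "(j \<in> v) = (j \<notin> z)" "flip b v \<in> V" "(a \<in> v) = s2"
    using v inner unfolding wall_def orthant_def by auto
  have "(k \<in> z) \<noteq> c"
  proof
    assume "(k \<in> z) = c"
    then have "flip a z \<in> orthant V e b k s1 s3 c" using z' dist unfolding orthant_def by (auto simp: mem_flip_iff)
    then show False using sub z' unfolding orthant_def by (auto simp: mem_flip_iff)
  qed
  have "z \<subseteq> {0..<n}" "y0 \<subseteq> {0..<n}" "y1 \<subseteq> {0..<n}" using z'(1) y0(1) y1(1) by (simp_all add: vertex_subset)
  then have lt: "set [e, a, b, k, j] \<subseteq> {0..<n}"
    using shatters3_lt[OF abc] y(3) y0(4) \<open>(k \<in> z) \<noteq> c\<close> by auto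
  have neq: "e \<noteq> a" "b \<noteq> a" "k \<noteq> a" "j \<noteq> a" "e \<noteq> b" "a \<noteq> b" "k \<noteq> b" "j \<noteq> b"
    using dist by auto
  let ?w = "\<lambda>p1 p2 p3 p4 p5. [p1, p2, p3, p4, p5] \<in> patterns V [e, a, b, k, j]"
  let ?jz = "j \<in> z"
  have pattern: "?w (e \<in> x) (a \<in> x) (b \<in> x) (k \<in> x) (j \<in> x)" if "x \<in> V" for x
    using map_mem_patterns[OF that, of "[e, a, b, k, j]"] by simp
  have anti: "\<forall>p1 p2 p3 p4 p5. ?w p1 p2 p3 p4 p5 \<longrightarrow> ?w (\<not>p1) (\<not>p2) (\<not>p3) (\<not>p4) (\<not>p5)"
    by (auto dest: patterns_antipodal[OF lt])
  have square_ea: "\<forall>p1 p2 p3 p4 p5. ?w p1 p2 p3 p4 p5 \<longrightarrow> ?w (\<not>p1) (\<not>p2) p3 p4 p5 \<longrightarrow>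
      ?w (\<not>p1) p2 p3 p4 p5 \<or> ?w p1 (\<not>p2) p3 p4 p5"
    using patterns_square[OF dist, of 0 1 "[_, _, _, _, _]"] by simp
  have square_bk: "\<forall>p1 p2 p3 p4 p5. ?w p1 p2 p3 p4 p5 \<longrightarrow> ?w p1 p2 (\<not>p3) (\<not>p4) p5 \<longrightarrow>
      ?w p1 p2 (\<not>p3) p4 p5 \<or> ?w p1 p2 p3 (\<not>p4) p5"
    using patterns_square[OF dist, of 2 3 "[_, _, _, _, _]"] by simp
  have wall_z: "?w s1 s2 s3 (\<not> c) ?jz" "?w s1 (\<not> s2) s3 (\<not> c) ?jz"
    using pattern[OF z'(1)] pattern[OF z'(5)] \<open>(k \<in> z) \<noteq> c\<close> by (simp_all add: z'(2-4) neq mem_flip_iff)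
  have wall_j: "\<forall>d. \<not> (?w s1 s2 s3 d (\<not> ?jz) \<and> ?w s1 (\<not> s2) s3 d (\<not> ?jz))"
  proof (intro allI notI)
    fix d assume H: "?w s1 s2 s3 d (\<not> ?jz) \<and> ?w s1 (\<not> s2) s3 d (\<not> ?jz)"
    have "1 < length [e, a, b, k, j]"
      "[s1, s2, s3, d, \<not> ?jz][1 := \<not> [s1, s2, s3, d, \<not> ?jz] ! 1] \<in> patterns V [e, a, b, k, j]"
      using H by simp_all
    from edge_of_patterns[OF dist this(1) conjunct1[OF H] this(2)] obtain x where
      "x \<in> V" "map (\<lambda>i. i \<in> x) [e, a, b, k, j] = [s1, s2, s3, d, \<not> ?jz]" "flip ([e, a, b, k, j] ! 1) x \<in> V"
      by blast
    then have "x \<in> wall V e a b s1 s2 s3" "(j \<in> x) \<noteq> ?jz" by (simp_all add: wall_def orthant_def)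
    then show False using z by auto
  qed
  have not_a: "\<forall>p5. \<not> ?w s1 (\<not> s2) s3 c p5"
  proof (intro allI notI)
    fix p5 assume "?w s1 (\<not> s2) s3 c p5"
    then obtain x where "x \<in> V" "(e \<in> x) = s1" "(a \<in> x) = (\<not> s2)" "(b \<in> x) = s3" "(k \<in> x) = c"
      unfolding mem_patterns_iff by auto
    then show False using sub unfolding orthant_def by auto
  qed
  have y_patterns: "?w s1 s2 s3 c (j \<in> y0)" "?w s1 s2 (\<not> s3) c (j \<in> y0)"
    "?w s1 s2 s3 c (j \<in> y1)" "?w s1 s2 (\<not> s3) c (j \<in> y1)"
    using pattern[OF y0(1)] pattern[OF y0(5)] pattern[OF y1(1)] pattern[OF y1(5)]
    by (simp_all add: y0(2-4,6) y1(2-4,6) neq mem_flip_iff)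
  have wall_b: "\<forall>p5. ?w s1 s2 s3 c p5 \<and> ?w s1 s2 (\<not> s3) c p5"
  proof
    fix p5
    have "p5 = (j \<in> y0) \<or> p5 = (j \<in> y1)" using y(3) by auto
    then show "?w s1 s2 s3 c p5 \<and> ?w s1 s2 (\<not> s3) c p5" using y_patterns by auto
  qed
  have "?w s1 s2 s3 (\<not> c) (\<not> ?jz)" "?w s1 s2 (\<not> s3) (\<not> c) (\<not> ?jz)"
    using pattern[OF v'(1)] pattern[OF v'(5)] kv by (simp_all add: v'(2-4,6) neq mem_flip_iff)
  from full_projection5[OF anti square_ea square_bk wall_z wall_j not_a wall_b this]
  have full: "\<forall>p1 p3 p4 p5. \<exists>p2. ?w p1 p2 p3 p4 p5" .
  have "distinct [e, b, k, j]" using dist by simp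
  then obtain m1 m2 m3 m4 where missing: "[m1, m2, m3, m4] \<notin> patterns V [e, b, k, j]"
    by (rule missing_pattern4)
  obtain m where "?w m1 m m2 m3 m4" using full by blast
  then have "[m1, m2, m3, m4] \<in> patterns V [e, b, k, j]" by (auto simp: mem_patterns_iff)
  with missing show False by contradiction
qed

lemma shrink_suborthant_wall:
  assumes abc: "shatters3 V e a b" and z: "wall V e a b s1 s2 s3 = {z}"
    and k: "k \<noteq> a" "shatters3 V e b k" "orthant V e b k s1 s3 c \<subset> orthant V e a b s1 s2 s3"
    and y: "y0 \<in> wall V e b k s1 s3 c" "y1 \<in> wall V e b k s1 s3 c" "y0 \<noteq> y1"
  obtains j c' where "j \<noteq> a" "shatters3 V e b j"
    "orthant V e b j s1 s3 c' \<subset> orthant V e a b s1 s2 s3"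
    "card (wall V e b j s1 s3 c') < card (wall V e b k s1 s3 c)"
proof -
  let ?R = "orthant V e a b s1 s2 s3" and ?B = "wall V e b k s1 s3 c"
  have sub: "orthant V e b k s1 s3 c \<subseteq> ?R" using k(3) by blast
  obtain j where j: "j \<in> y0 \<longleftrightarrow> j \<notin> y1" using y(3) by blast
  have y0: "(e \<in> y0) = s1" "(a \<in> y0) = s2" "(b \<in> y0) = s3" "(k \<in> y0) = c"
    and y1: "(e \<in> y1) = s1" "(a \<in> y1) = s2" "(b \<in> y1) = s3" "(k \<in> y1) = c"
    using y(1,2) sub unfolding wall_def orthant_def by auto
  have dist: "distinct [e, a, b, k, j]"
    using shatters3_distinct[OF abc] shatters3_distinct[OF k(2)] k(1) j y0 y1 by auto
  have "z \<in> ?R" using z unfolding wall_def by blast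
  have "(j \<in> y0) \<noteq> (j \<in> z) \<or> (j \<in> y1) \<noteq> (j \<in> z)" using j by auto
  then obtain y x where yx: "y \<in> ?B" "(j \<in> y) \<noteq> (j \<in> z)" "x \<in> ?B" "(j \<in> x) = (j \<in> z)"
    using y(1,2) j by blast
  have inner: "orthant V e b j s1 s3 (j \<notin> z) \<subseteq> ?R"
    using yx(1,2) by (intro suborthant_through_wall[OF z sub _ _ dist]) (auto simp: wall_def)
  moreover have "z \<notin> orthant V e b j s1 s3 (j \<notin> z)" unfolding orthant_def by simp
  ultimately have "orthant V e b j s1 s3 (j \<notin> z) \<subset> ?R" using \<open>z \<in> ?R\<close> by blast
  moreover have "wall V e b j s1 s3 (j \<notin> z) \<subseteq> ?B - {x}"
  proof
    fix v assume v: "v \<in> wall V e b j s1 s3 (j \<notin> z)"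
    have "(k \<in> v) = c" by (rule suborthant_wall_side[OF abc z sub y(1,2) j dist inner v])
    then show "v \<in> ?B - {x}" using v yx(4) unfolding wall_def orthant_def by auto
  qed
  then have "card (wall V e b j s1 s3 (j \<notin> z)) < card ?B"
    using yx(3) finite_wall by (meson card_Diff1_less card_mono finite_Diff le_less_trans)
  moreover have "shatters3 V e b j" using k(2) y(1,2) j by (rule shatters3_of_split_wall)
  moreover have "j \<noteq> a" using dist by auto
  ultimately show thesis using that by blast
qed

lemma exists_singleton_suborthant_wall:
  assumes abc: "shatters3 V e a b" and z: "wall V e a b s1 s2 s3 = {z}"
    and big: "card (orthant V e a b s1 s2 s3) \<noteq> 1"
  obtains k c where "shatters3 V e b k" "orthant V e b k s1 s3 c \<subset> orthant V e a b s1 s2 s3"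
    "card (wall V e b k s1 s3 c) = 1"
proof -
  define P where "P m \<longleftrightarrow> (\<exists>k c. k \<noteq> a \<and> shatters3 V e b k \<and>
    orthant V e b k s1 s3 c \<subset> orthant V e a b s1 s2 s3 \<and> card (wall V e b k s1 s3 c) = m)" for m
  obtain k0 c0 where "k0 \<noteq> a" "shatters3 V e b k0" "orthant V e b k0 s1 s3 c0 \<subset> orthant V e a b s1 s2 s3"
    using abc z big by (rule exists_proper_suborthant)
  then have "P (card (wall V e b k0 s1 s3 c0))" unfolding P_def by blast
  then have "P (Least P)" by (rule LeastI)
  then obtain k c where kc: "k \<noteq> a" "shatters3 V e b k" "orthant V e b k s1 s3 c \<subset> orthant V e a b s1 s2 s3"
    and min: "card (wall V e b k s1 s3 c) = Least P"
    unfolding P_def by blast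
  have "card (wall V e b k s1 s3 c) = 1"
  proof (rule ccontr)
    assume "card (wall V e b k s1 s3 c) \<noteq> 1"
    then obtain y0 y1 where "y0 \<in> wall V e b k s1 s3 c" "y1 \<in> wall V e b k s1 s3 c" "y0 \<noteq> y1"
      by (rule two_elements[OF finite_wall wall_nonempty[OF kc(2)]])
    then obtain j c' where "j \<noteq> a" "shatters3 V e b j" "orthant V e b j s1 s3 c' \<subset> orthant V e a b s1 s2 s3"
      and smaller: "card (wall V e b j s1 s3 c') < card (wall V e b k s1 s3 c)"
      by (rule shrink_suborthant_wall[OF abc z kc])
    then have "P (card (wall V e b j s1 s3 c'))" unfolding P_def by blast
    moreover have "card (wall V e b j s1 s3 c') < Least P" using smaller min by simp
    ultimately show False using not_less_Least by blast
  qed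
  with kc(2,3) show thesis by (rule that)
qed

lemma singleton_wall_imp_degree3:
  assumes "shatters3 V e a b" "card (wall V e a b s1 s2 s3) = 1"
  shows "\<exists>v\<in>V. degree V v = 3 \<and> flip e v \<in> V"
  using assms
proof (induction "card (orthant V e a b s1 s2 s3)" arbitrary: a b s2 s3 rule: less_induct)
  case less
  obtain z where z: "wall V e a b s1 s2 s3 = {z}" using less.prems(2) by (rule card_1_singletonE)
  show ?case
  proof (cases "card (orthant V e a b s1 s2 s3) = 1")
    case True
    then obtain v where v: "orthant V e a b s1 s2 s3 = {v}" by (rule card_1_singletonE)
    then have "v \<in> V" unfolding orthant_def by blast
    with singleton_orthant_degree[OF less.prems(1) v] show ?thesis by blast
  next
    case False
    obtain k c where k: "shatters3 V e b k" "orthant V e b k s1 s3 c \<subset> orthant V e a b s1 s2 s3"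
      "card (wall V e b k s1 s3 c) = 1"
      using less.prems(1) z False by (rule exists_singleton_suborthant_wall)
    have "card (orthant V e b k s1 s3 c) < card (orthant V e a b s1 s2 s3)"
      by (rule psubset_card_mono[OF finite_orthant k(2)])
    then show ?thesis using less.hyps k(1,3) by blast
  qed
qed

lemma degree3_vertex_on_class:
  assumes "u \<in> V" "e \<in> u" "u' \<in> V" "e \<notin> u'" "distinct [t0, t1, t2]" "shatters V {t0, t1, t2}"
  shows "\<exists>v\<in>V. degree V v = 3 \<and> flip e v \<in> V"
proof -
  obtain a b where "shatters3 V e a b" using assms by (rule shatters3_through)
  then obtain a b s1 s2 s3 where "shatters3 V e a b" "card (wall V e a b s1 s2 s3) = 1"
    by (rule exists_singleton_wall)
  then show ?thesis by (rule singleton_wall_imp_degree3)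
qed

end

lemma isometric_sub_geodesic:
  assumes "isometric_sub n V" "u \<in> V" "w \<in> V"
  shows "\<exists>xs. walk V xs \<and> hd xs = u \<and> last xs = w \<and> length xs = Suc (hdist u w)"
proof -
  define Q where "Q k \<longleftrightarrow> (\<exists>xs. walk V xs \<and> hd xs = u \<and> last xs = w \<and> length xs = Suc k)" for k
  have "reachable V u w" "gdist V u w = hdist u w" using assms unfolding isometric_sub_def by blast+
  then obtain xs where xs: "walk V xs" "hd xs = u" "last xs = w" unfolding reachable_def by blast
  then have "Q (length xs - 1)" unfolding Q_def walk_def by (intro exI[of _ xs]) auto
  then have "Q (LEAST k. Q k)" by (rule LeastI)
  moreover have "gdist V u w = (LEAST k. Q k)" unfolding gdist_def Q_def ..
  ultimately show ?thesis using \<open>gdist V u w = hdist u w\<close> unfolding Q_def by simp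
qed

theorem mainTheorem20:
  fixes n :: nat and V :: "nat set set" and e :: nat
  assumes "partial_cube n V"
    and "antipodal n V"
    and "pc_rank V = 3"
    and "e < n"
  shows "\<exists>v\<in>V. degree V v = 3 \<and> flip e v \<in> V"
proof -
  have iso: "isometric_sub n V" and nonconstant: "\<forall>f<n. \<exists>u\<in>V. \<exists>v\<in>V. f \<in> u \<and> f \<notin> v"
    using assms(1) unfolding partial_cube_def by auto
  then have sub: "V \<subseteq> Pow {0..<n}" and "V \<noteq> {}" unfolding isometric_sub_def by auto
  have fin: "finite V" using sub by (rule finite_subset) simp
  interpret antipodal_rank_le3 n V
  proof
    show "\<exists>xs. walk V xs \<and> hd xs = u \<and> last xs = w \<and> length xs = Suc (hdist u w)"
      if "u \<in> V" "w \<in> V" for u w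
      using iso that by (rule isometric_sub_geodesic)
    show "{0..<n} - v \<in> V" if "v \<in> V" for v using assms(2) that unfolding antipodal_def by blast
    show "\<not> shatters V S" if "card S = 4" for S
    proof
      assume "shatters V S"
      then have "cube_minor V 4" using shatters_imp_cube_minor[OF sub] that by metis
      then show False using cube_minor_le_pc_rank[OF fin] assms(3) by fastforce
    qed
  qed (fact sub)
  have "cube_minor V 3" using cube_minor_pc_rank[OF fin \<open>V \<noteq> {}\<close> sub] assms(3) by simp
  then obtain t0 t1 t2 where "distinct [t0, t1, t2]" "shatters V {t0, t1, t2}"
    by (rule cube_minor3_shatters)
  moreover obtain u u' where "u \<in> V" "e \<in> u" "u' \<in> V" "e \<notin> u'" using nonconstant assms(4) by blast
  ultimately show ?thesis using degree3_vertex_on_class by blast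
qed

end
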